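(* Let $X_1$ and $X_2$ be uniformly quasi-locally bounded semimetric spaces with basepoints $x_1$ and $x_2$ respectively, and let $\beta_j$ be the growth function of $X_j$ at $x_j$ for $j=1,2$. If $X_1$ quasi-isometrically embeds into $X_2$, then $\beta_1\preccurlyeq\beta_2$. In particular, if $X_1$ and $X_2$ are quasi-isometric then $\beta_1\sim\beta_2$.
   Context: A semimetric space is a set $X$ with $d:X\times X\to\mathbb{R}^{\ge0}\cup\{\infty\}$ with $d(x,y)=0$ iff $x=y$ and the triangle inequality (not necessarily symmetric). A basepoint is $x_0$ with $d(x_0,y)<\infty$ for all $y$. Out-ball $\overrightarrow{\mathcal{B}}_t(x)=\{y:d(x,y)\le t\}$. $X$ is uniformly quasi-locally bounded if $\sup_{x\in X}|\overrightarrow{\mathcal{B}}_t(x)|<\infty$ for all $t\in\mathbb{N}$; its growth function at $x_0$ is $\beta(t)=|\overrightarrow{\mathcal{B}}_t(x_0)|$. A map $f:X\to X'$ is a quasi-isometric embedding if there are $1\le\lambda<\infty$, $0<\epsilon<\infty$ with $\frac1\lambda d(x,y)-\epsilon\le d'(f(x),f(y))\le\lambda d(x,y)+\epsilon$ for all $x,y$; a quasi-isometry if moreover for some $0\le\mu<\infty$ every $x'\in X'$ has some $x$ with $\max(d'(x',f(x)),d'(f(x),x'))\le\mu$. For monotone non-decreasing $\alpha_1,\alpha_2:\mathbb{N}\to\mathbb{N}$, $\alpha_1\preccurlyeq\alpha_2$ means there are natural numbers $k_1,k_2\ge1$ with $\alpha_1(t)\le k_1\alpha_2(k_2t)$ for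 all $t$, and $\alpha_1\sim\alpha_2$ means both $\alpha_1\preccurlyeq\alpha_2$ and $\alpha_2\preccurlyeq\alpha_1$. *)

theory Defs
  imports "HOL-Library.Extended_Real"
begin

definition semimetric :: "'a set \<Rightarrow> ('a \<Rightarrow> 'a \<Rightarrow> ereal) \<Rightarrow> bool" where
  "semimetric X d \<longleftrightarrow>
     (\<forall>x\<in>X. \<forall>y\<in>X. 0 \<le> d x y) \<and>
     (\<forall>x\<in>X. \<forall>y\<in>X. d x y = 0 \<longleftrightarrow> x = y) \<and>
     (\<forall>x\<in>X. \<forall>y\<in>X. \<forall>z\<in>X. d x z \<le> d x y + d y z)"

definition basepoint :: "'a set \<Rightarrow> ('a \<Rightarrow> 'a \<Rightarrow> ereal) \<Rightarrow> 'a \<Rightarrow> bool" where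
  "basepoint X d x0 \<longleftrightarrow> x0 \<in> X \<and> (\<forall>y\<in>X. d x0 y < \<infinity>)"

definition out_ball :: "'a set \<Rightarrow> ('a \<Rightarrow> 'a \<Rightarrow> ereal) \<Rightarrow> real \<Rightarrow> 'a \<Rightarrow> 'a set" where
  "out_ball X d t x = {y\<in>X. d x y \<le> ereal t}"

definition unif_quasi_loc_bounded :: "'a set \<Rightarrow> ('a \<Rightarrow> 'a \<Rightarrow> ereal) \<Rightarrow> bool" where
  "unif_quasi_loc_bounded X d \<longleftrightarrow>
     (\<forall>t::nat. \<exists>M::nat. \<forall>x\<in>X. finite (out_ball X d (real t) x) \<and> card (out_ball X d (real t) x) \<le> M)"

definition growth :: "'a set \<Rightarrow> ('a \<Rightarrow> 'a \<Rightarrow> ereal) \<Rightarrow> 'a \<Rightarrow> nat \<Rightarrow> nat" where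
  "growth X d x0 t = card (out_ball X d (real t) x0)"

definition growth_le :: "(nat \<Rightarrow> nat) \<Rightarrow> (nat \<Rightarrow> nat) \<Rightarrow> bool" (infix "\<preceq>\<^sub>g" 50) where
  "\<alpha>1 \<preceq>\<^sub>g \<alpha>2 \<longleftrightarrow> (\<exists>k1 k2::nat. k1 \<ge> 1 \<and> k2 \<ge> 1 \<and> (\<forall>t. \<alpha>1 t \<le> k1 * \<alpha>2 (k2 * t)))"

definition growth_equiv :: "(nat \<Rightarrow> nat) \<Rightarrow> (nat \<Rightarrow> nat) \<Rightarrow> bool" (infix "\<sim>\<^sub>g" 50) where
  "\<alpha>1 \<sim>\<^sub>g \<alpha>2 \<longleftrightarrow> \<alpha>1 \<preceq>\<^sub>g \<alpha>2 \<and> \<alpha>2 \<preceq>\<^sub>g \<alpha>1"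

definition qi_embedding ::
  "'a set \<Rightarrow> ('a \<Rightarrow> 'a \<Rightarrow> ereal) \<Rightarrow> 'b set \<Rightarrow> ('b \<Rightarrow> 'b \<Rightarrow> ereal) \<Rightarrow> ('a \<Rightarrow> 'b) \<Rightarrow> bool" where
  "qi_embedding X d X' d' f \<longleftrightarrow> f ` X \<subseteq> X' \<and>
     (\<exists>lam eps::real. 1 \<le> lam \<and> 0 < eps \<and>
       (\<forall>x\<in>X. \<forall>y\<in>X. ereal (1/lam) * d x y - ereal eps \<le> d' (f x) (f y) \<and>
                      d' (f x) (f y) \<le> ereal lam * d x y + ereal eps))"

definition quasi_isometry ::
  "'a set \<Rightarrow> ('a \<Rightarrow> 'a \<Rightarrow> ereal) \<Rightarrow> 'b set \<Rightarrow> ('b \<Rightarrow> 'b \<Rightarrow> ereal) \<Rightarrow> ('a \<Rightarrow> 'b) \<Rightarrow> bool" where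
  "quasi_isometry X d X' d' f \<longleftrightarrow> qi_embedding X d X' d' f \<and>
     (\<exists>\<mu>::real. 0 \<le> \<mu> \<and> (\<forall>x'\<in>X'. \<exists>x\<in>X. max (d' x' (f x)) (d' (f x) x') \<le> ereal \<mu>))"

end

theory Submission
  imports Defs
begin

text \<open>A map h from X into Y that sends t-balls around the basepoint into (C + L t)-balls and
  whose fibres have bounded diameter R sends the t-ball onto a subset of a (k t)-ball, each point
  of which has at most M preimages, M the uniform bound on R-balls of X; hence
  \<open>\<beta>\<^sub>X(t) \<le> M \<beta>\<^sub>Y(k t)\<close>. A quasi-isometric embedding is such a map, and so is a quasi-inverse of a
  quasi-isometry, which gives both directions of the equivalence.\<close>

lemma card_le_mult_card_if_fibres_bounded:
  assumes "finite S" "h ` A \<subseteq> S"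
    and "\<And>s. s \<in> S \<Longrightarrow> finite {z\<in>A. h z = s} \<and> card {z\<in>A. h z = s} \<le> M"
  shows "finite A \<and> card A \<le> M * card S"
proof -
  have A_eq: "A = (\<Union>s\<in>S. {z\<in>A. h z = s})" using assms(2) by auto
  have "finite A" by (subst A_eq) (use assms in auto)
  have "card A \<le> (\<Sum>s\<in>S. card {z\<in>A. h z = s})"
    by (subst A_eq) (rule card_UN_le[OF assms(1)])
  also have "\<dots> \<le> (\<Sum>s\<in>S. M)" by (rule sum_mono) (use assms(3) in auto)
  finally show ?thesis using \<open>finite A\<close> by (simp add: mult.commute)
qed

lemma growth_le_if_coarse_map:
  assumes U1: "unif_quasi_loc_bounded X d" and U2: "unif_quasi_loc_bounded Y e"
    and b: "b \<in> Y" "e b b = 0" and hXY: "h ` X \<subseteq> Y"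
    and C: "C \<ge> 0" and L: "L \<ge> 0"
    and coarse_lipschitz:
      "\<And>y t. y \<in> X \<Longrightarrow> d a y \<le> ereal (real t) \<Longrightarrow> e b (h y) \<le> ereal (C + L * real t)"
    and fibres_bounded: "\<And>y z. y \<in> X \<Longrightarrow> z \<in> X \<Longrightarrow> h y = h z \<Longrightarrow> d y z \<le> ereal R"
  shows "growth X d a \<preceq>\<^sub>g growth Y e b"
proof -
  define r where "r = real (nat \<lceil>R\<rceil>)"
  obtain M where M: "\<And>x. x \<in> X \<Longrightarrow> finite (out_ball X d r x) \<and> card (out_ball X d r x) \<le> M"
    using U1 unfolding unif_quasi_loc_bounded_def r_def by blast
  define k2 where "k2 = nat \<lceil>C + L\<rceil> + 1"
  \<comment> \<open>At t = 0 the radius k2 t vanishes while C + L t need not, so the 0-ball is paid for by k1.\<close>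
  define k1 where "k1 = max 1 (max M (growth X d a 0))"
  have ball_Y_finite: "finite (out_ball Y e (real t) b)" for t
    using U2 b unfolding unif_quasi_loc_bounded_def by blast
  have "growth Y e b 0 \<ge> 1"
  proof -
    have "b \<in> out_ball Y e (real 0) b" using b by (simp add: out_ball_def)
    then show ?thesis unfolding growth_def
      using ball_Y_finite[of 0] by (metis Suc_leI card_gt_0_iff empty_iff One_nat_def)
  qed
  have "growth X d a t \<le> k1 * growth Y e b (k2 * t)" for t
  proof (cases "t = 0")
    case True
    have "growth X d a 0 \<le> k1 * growth Y e b 0"
      using \<open>growth Y e b 0 \<ge> 1\<close> unfolding k1_def
      by (metis max.cobounded2 max.coboundedI2 mult_le_mono mult.right_neutral)
    then show ?thesis using True by simp
  next
    case False
    let ?A = "out_ball X d (real t) a" and ?S = "out_ball Y e (real (k2 * t)) b"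
    have "C * 1 \<le> C * real t" using False C by (intro mult_left_mono) auto
    then have "C + L * real t \<le> (C + L) * real t" by (simp add: algebra_simps)
    also have "\<dots> \<le> real k2 * real t" unfolding k2_def
      by (intro mult_right_mono) (linarith, simp)
    finally have radius: "C + L * real t \<le> real (k2 * t)" by simp
    have image: "h ` ?A \<subseteq> ?S"
    proof
      fix w assume "w \<in> h ` ?A"
      then obtain y where y: "y \<in> X" "d a y \<le> ereal (real t)" "w = h y" by (auto simp: out_ball_def)
      have "e b w \<le> ereal (real (k2 * t))"
        using coarse_lipschitz[OF y(1,2)] radius y(3) order_trans by fastforce
      then show "w \<in> ?S" using hXY y by (auto simp: out_ball_def)
    qed
    have fibres: "finite {z\<in>?A. h z = s} \<and> card {z\<in>?A. h z = s} \<le> M" for s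
    proof (cases "\<exists>y\<in>?A. h y = s")
      case True
      then obtain y where y: "y \<in> ?A" "h y = s" by blast
      have "d y z \<le> ereal r" if "z \<in> ?A" "h z = s" for z
      proof -
        have "d y z \<le> ereal R" using fibres_bounded[of y z] y that by (simp add: out_ball_def)
        also have "\<dots> \<le> ereal r" unfolding r_def by simp linarith
        finally show ?thesis .
      qed
      then have "{z\<in>?A. h z = s} \<subseteq> out_ball X d r y" by (auto simp: out_ball_def)
      moreover have "y \<in> X" using y by (simp add: out_ball_def)
      ultimately show ?thesis using M[of y] by (meson card_mono le_trans finite_subset)
    next
      case False
      then have "{z\<in>?A. h z = s} = {}" by blast
      then show ?thesis by (metis card.empty finite.emptyI zero_le)
    qed
    have "card ?A \<le> M * card ?S"
      using card_le_mult_card_if_fibres_bounded[OF ball_Y_finite image fibres] by blast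
    also have "\<dots> \<le> k1 * card ?S" unfolding k1_def by (intro mult_right_mono) auto
    finally show ?thesis unfolding growth_def .
  qed
  moreover have "k1 \<ge> 1" "k2 \<ge> 1" unfolding k1_def k2_def by auto
  ultimately show ?thesis unfolding growth_le_def by blast
qed

lemma ereal_le_of_scaled_lower_bound:
  assumes "0 < lam" "0 \<le> a" "ereal (1/lam) * a - ereal eps \<le> ereal B"
  shows "a \<le> ereal (lam * (B + eps))"
proof (cases a)
  case (real r)
  then have "r / lam - eps \<le> B" using assms by simp
  then show ?thesis using real assms(1) by (simp add: field_simps)
next
  case PInf
  then show ?thesis using assms by simp
qed (use assms in simp)

lemma qi_embedding_growth_le:
  assumes "semimetric X1 d1" "unif_quasi_loc_bounded X1 d1" "x1 \<in> X1"
    and "semimetric X2 d2" "unif_quasi_loc_bounded X2 d2" "basepoint X2 d2 x2"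
    and "qi_embedding X1 d1 X2 d2 f"
  shows "growth X1 d1 x1 \<preceq>\<^sub>g growth X2 d2 x2"
proof -
  obtain lam eps where lam: "1 \<le> lam" and "0 < eps" and fX: "f ` X1 \<subseteq> X2"
    and lower: "\<And>x y. x \<in> X1 \<Longrightarrow> y \<in> X1 \<Longrightarrow> ereal (1/lam) * d1 x y - ereal eps \<le> d2 (f x) (f y)"
    and upper: "\<And>x y. x \<in> X1 \<Longrightarrow> y \<in> X1 \<Longrightarrow> d2 (f x) (f y) \<le> ereal lam * d1 x y + ereal eps"
    using assms(7) unfolding qi_embedding_def by blast
  have x2: "x2 \<in> X2" and fx1: "f x1 \<in> X2" using assms(3,6) fX unfolding basepoint_def by auto
  have nonneg1: "\<And>x y. x \<in> X1 \<Longrightarrow> y \<in> X1 \<Longrightarrow> 0 \<le> d1 x y"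
    and nonneg2: "\<And>x y. x \<in> X2 \<Longrightarrow> y \<in> X2 \<Longrightarrow> 0 \<le> d2 x y"
    and zero2: "\<And>x. x \<in> X2 \<Longrightarrow> d2 x x = 0"
    and triangle2: "\<And>x y z. x \<in> X2 \<Longrightarrow> y \<in> X2 \<Longrightarrow> z \<in> X2 \<Longrightarrow> d2 x z \<le> d2 x y + d2 y z"
    using assms(1,4) unfolding semimetric_def by auto
  define c where "c = real_of_ereal (d2 x2 (f x1))"
  have "0 \<le> d2 x2 (f x1)" "d2 x2 (f x1) < \<infinity>"
    using nonneg2[OF x2 fx1] assms(6) fx1 unfolding basepoint_def by auto
  then have c: "d2 x2 (f x1) = ereal c" "0 \<le> c" unfolding c_def
    by (auto simp: ereal_real real_of_ereal_pos)
  show ?thesis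
  proof (rule growth_le_if_coarse_map[OF assms(2,5) x2 zero2[OF x2] fX,
        where C = "c + eps" and L = lam and R = "lam * eps"])
    show "0 \<le> c + eps" "0 \<le> lam" using c \<open>0 < eps\<close> lam by auto
  next
    fix y t assume y: "y \<in> X1" and "d1 x1 y \<le> ereal (real t)"
    then have "ereal lam * d1 x1 y \<le> ereal lam * ereal (real t)"
      using lam by (intro ereal_mult_left_mono) auto
    have "d2 x2 (f y) \<le> d2 x2 (f x1) + d2 (f x1) (f y)"
      using triangle2[OF x2 fx1] fX y by blast
    also have "\<dots> \<le> ereal c + (ereal lam * d1 x1 y + ereal eps)"
      using upper[OF assms(3) y] c by (intro add_mono) auto
    also have "\<dots> \<le> ereal c + (ereal lam * ereal (real t) + ereal eps)"
      by (intro add_left_mono add_right_mono) fact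
    finally show "d2 x2 (f y) \<le> ereal (c + eps + lam * real t)" by (simp add: algebra_simps)
  next
    fix y z assume y: "y \<in> X1" and z: "z \<in> X1" and "f y = f z"
    then have "d2 (f y) (f z) = 0" using zero2 fX by auto
    then have "ereal (1/lam) * d1 y z - ereal eps \<le> ereal 0"
      using lower[OF y z] by (simp add: zero_ereal_def)
    then show "d1 y z \<le> ereal (lam * eps)"
      using ereal_le_of_scaled_lower_bound[of lam] lam nonneg1[OF y z] by fastforce
  qed
qed

lemma quasi_isometry_growth_ge:
  assumes "semimetric X1 d1" "unif_quasi_loc_bounded X1 d1" "basepoint X1 d1 x1"
    and "semimetric X2 d2" "unif_quasi_loc_bounded X2 d2" "x2 \<in> X2"
    and "quasi_isometry X1 d1 X2 d2 f"
  shows "growth X2 d2 x2 \<preceq>\<^sub>g growth X1 d1 x1"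
proof -
  obtain lam eps where lam: "1 \<le> lam" and "0 < eps" and fX: "f ` X1 \<subseteq> X2"
    and lower: "\<And>x y. x \<in> X1 \<Longrightarrow> y \<in> X1 \<Longrightarrow> ereal (1/lam) * d1 x y - ereal eps \<le> d2 (f x) (f y)"
    using assms(7) unfolding quasi_isometry_def qi_embedding_def by blast
  obtain mu where "0 \<le> mu" and "\<forall>x'\<in>X2. \<exists>x\<in>X1. max (d2 x' (f x)) (d2 (f x) x') \<le> ereal mu"
    using assms(7) unfolding quasi_isometry_def by blast
  then obtain g where "\<forall>y\<in>X2. g y \<in> X1 \<and> max (d2 y (f (g y))) (d2 (f (g y)) y) \<le> ereal mu"
    by (metis bchoice)
  then have gX: "g ` X2 \<subseteq> X1"
    and to_fg: "\<And>y. y \<in> X2 \<Longrightarrow> d2 y (f (g y)) \<le> ereal mu"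
    and from_fg: "\<And>y. y \<in> X2 \<Longrightarrow> d2 (f (g y)) y \<le> ereal mu"
    by auto
  have x1: "x1 \<in> X1" using assms(3) unfolding basepoint_def by auto
  have nonneg1: "\<And>x y. x \<in> X1 \<Longrightarrow> y \<in> X1 \<Longrightarrow> 0 \<le> d1 x y"
    and zero1: "\<And>x. x \<in> X1 \<Longrightarrow> d1 x x = 0"
    and triangle1: "\<And>x y z. x \<in> X1 \<Longrightarrow> y \<in> X1 \<Longrightarrow> z \<in> X1 \<Longrightarrow> d1 x z \<le> d1 x y + d1 y z"
    and triangle2: "\<And>x y z. x \<in> X2 \<Longrightarrow> y \<in> X2 \<Longrightarrow> z \<in> X2 \<Longrightarrow> d2 x z \<le> d2 x y + d2 y z"
    using assms(1,4) unfolding semimetric_def by auto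
  define z where "z = g x2"
  have z: "z \<in> X1" and fz: "f z \<in> X2" using gX fX assms(6) unfolding z_def by auto
  define c where "c = real_of_ereal (d1 x1 z)"
  have "0 \<le> d1 x1 z" "d1 x1 z < \<infinity>"
    using nonneg1[OF x1 z] assms(3) z unfolding basepoint_def by auto
  then have c: "d1 x1 z = ereal c" "0 \<le> c" unfolding c_def
    by (auto simp: ereal_real real_of_ereal_pos)
  show ?thesis
  proof (rule growth_le_if_coarse_map[OF assms(5,2) x1 zero1[OF x1] gX,
        where C = "c + lam * (2 * mu + eps)" and L = lam and R = "2 * mu"])
    show "0 \<le> c + lam * (2 * mu + eps)" "0 \<le> lam"
      using c lam \<open>0 \<le> mu\<close> \<open>0 < eps\<close> by auto
  next
    fix y t assume y: "y \<in> X2" and dt: "d2 x2 y \<le> ereal (real t)"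
    have gy: "g y \<in> X1" and fgy: "f (g y) \<in> X2" using gX fX y by auto
    have "d2 (f z) (f (g y)) \<le> d2 (f z) x2 + (d2 x2 y + d2 y (f (g y)))"
      using triangle2[OF fz assms(6) fgy] triangle2[OF assms(6) y fgy]
      by (auto intro: order_trans add_left_mono)
    also have "\<dots> \<le> ereal mu + (ereal (real t) + ereal mu)"
      using from_fg[OF assms(6)] dt to_fg[OF y] unfolding z_def by (intro add_mono)
    finally have "d2 (f z) (f (g y)) \<le> ereal (2 * mu + real t)" by simp
    then have "d1 z (g y) \<le> ereal (lam * (2 * mu + real t + eps))"
      using lower[OF z gy] lam nonneg1[OF z gy]
      by (intro ereal_le_of_scaled_lower_bound) (auto intro: order_trans)
    then have "d1 x1 z + d1 z (g y) \<le> ereal c + ereal (lam * (2 * mu + real t + eps))"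
      unfolding c(1) by (rule add_left_mono)
    with triangle1[OF x1 z gy] show "d1 x1 (g y) \<le> ereal (c + lam * (2 * mu + eps) + lam * real t)"
      by (auto simp: algebra_simps intro: order_trans)
  next
    fix y w assume y: "y \<in> X2" and w: "w \<in> X2" and "g y = g w"
    then have "d2 y w \<le> d2 y (f (g y)) + d2 (f (g w)) w"
      using triangle2[OF y _ w, of "f (g y)"] gX fX by auto
    also have "\<dots> \<le> ereal mu + ereal mu" using to_fg[OF y] from_fg[OF w] by (rule add_mono)
    finally show "d2 y w \<le> ereal (2 * mu)" by simp
  qed
qed

theorem proposition6p4:
  fixes X1 :: "'a set" and d1 :: "'a \<Rightarrow> 'a \<Rightarrow> ereal" and x1 :: 'a
    and X2 :: "'b set" and d2 :: "'b \<Rightarrow> 'b \<Rightarrow> ereal" and x2 :: 'b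
  assumes "semimetric X1 d1" and "unif_quasi_loc_bounded X1 d1" and "basepoint X1 d1 x1"
    and "semimetric X2 d2" and "unif_quasi_loc_bounded X2 d2" and "basepoint X2 d2 x2"
  shows "((\<exists>f. qi_embedding X1 d1 X2 d2 f) \<longrightarrow> growth X1 d1 x1 \<preceq>\<^sub>g growth X2 d2 x2)
    \<and> ((\<exists>f. quasi_isometry X1 d1 X2 d2 f) \<longrightarrow> growth X1 d1 x1 \<sim>\<^sub>g growth X2 d2 x2)"
proof -
  have x1: "x1 \<in> X1" and x2: "x2 \<in> X2" using assms(3,6) unfolding basepoint_def by auto
  note embedding = qi_embedding_growth_le[OF assms(1,2) x1 assms(4-6)]
  note reverse = quasi_isometry_growth_ge[OF assms(1-5) x2]
  show ?thesis using embedding reverse unfolding growth_equiv_def quasi_isometry_def by blast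
qed

end
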